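(* Let $G:\mathbb{R}^2\to\mathbb{C}$ be quasi-periodic, and let $K,N\geq 8$ be integers and $(x,y)\in[0,1/K)\times[0,1/N)$. Assume $G(x+i/K,\,y+j/N)\neq 0$ for all $(i,j)\in\mathbb{Z}^2$, and let $H:\mathbb{R}^2\to\mathbb{R}$ be any function with $G=|G|e^{2\pi i H}$ at these points. Set $h_{i,j}=H(x+i/K,\,y+j/N)$ for $(i,j)\in\mathbb{Z}^2$. Then there exist integers $0\le i<K$ and $0\le j<N$ such that either $$\operatorname{dist}(h_{i+1,j}-h_{i,j},\mathbb{Z})>\tfrac18\quad\text{or}\quad \operatorname{dist}(h_{i,j+1}-h_{i,j},\mathbb{Z})>\tfrac18.$$
   Context: A function $G$ on $\mathbb{R}^2$ is quasi-periodic if $G(x,y+1)=G(x,y)$ and $G(x+1,y)=e^{2\pi i y}G(x,y)$ for all $(x,y)\in\mathbb{R}^2$. *)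

theory Defs
  imports "HOL-Analysis.Analysis"
begin

definition quasi_periodic :: "(real \<Rightarrow> real \<Rightarrow> complex) \<Rightarrow> bool" where
  "quasi_periodic G \<longleftrightarrow>
     (\<forall>x y. G x (y + 1) = G x y \<and> G (x + 1) y = exp (2 * pi * \<i> * complex_of_real y) * G x y)"

definition dist_Z :: "real \<Rightarrow> real" where
  "dist_Z t = infdist t \<int>"

end

theory Submission imports Defs begin

(*
  Idea: a discrete winding-number argument.  Sample the phase H of G on the grid
  (x + i/K, y + j/N) as h i j, and replace every edge increment of h by its signed
  distance to the nearest integer ("rounded increment").  The rounded increments
  around any grid cell always sum to an integer; if all increments in the
  fundamental box [0,K) x [0,N) were within 1/8 of an integer, each such cell sum
  would be 0.  Quasi-periodicity of G says that h is N-periodic in j up to integers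
  and that shifting i by K adds y + j/N up to integers; hence the rounded vertical
  increments at column K exceed those at column 0 by exactly 1/N.  Summing the cell
  circulations over the box (a discrete Stokes identity) then gives 0 = N * (1/N) = 1.

  The argument
  only needs K >= 1 and N >= 3.
*)

definition round_residue :: "real \<Rightarrow> real" where
  "round_residue t = t - of_int (round t)"

lemma round_residue_Ints: "t - round_residue t \<in> \<int>"
  by (simp add: round_residue_def)

text \<open>Its absolute value is a lower bound for the distance to the integers
  (in fact equal to it, but the inequality is all that is needed).\<close>
lemma abs_round_residue_le_dist_Z: "\<bar>round_residue t\<bar> \<le> dist_Z t"
proof -
  have "\<bar>round_residue t\<bar> \<le> (INF a\<in>\<int>. dist t a)"
  proof (rule cINF_greatest)
    show "(\<int>::real set) \<noteq> {}" by auto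
    fix a :: real assume "a \<in> \<int>"
    then obtain m where "a = of_int m" by (auto elim: Ints_cases)
    then show "\<bar>round_residue t\<bar> \<le> dist t a"
      using round_diff_minimal[of t m] by (simp add: round_residue_def dist_real_def)
  qed
  moreover have "(\<int>::real set) \<noteq> {}" by auto
  ultimately show ?thesis by (simp add: dist_Z_def infdist_notempty)
qed

lemma round_residue_shift:
  assumes "s - t \<in> \<int>"
  shows "round_residue s = round_residue t"
proof -
  obtain m where s: "s = t + of_int m"
    using assms by (metis Ints_cases add_diff_cancel_left' add_diff_eq add.commute)
  have "t + of_int m + 1/2 = (t + 1/2) + of_int m" by simp
  then have "round s = round t + m"
    unfolding s round_def by (simp only: floor_add_int)
  then show ?thesis by (simp add: round_residue_def s)
qed

lemma round_residue_small:
  assumes "\<bar>t\<bar> < 1/2"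
  shows "round_residue t = t"
  using round_unique'[of t 0] assms by (simp add: round_residue_def)

lemma Ints_abs_less_one_eq_0: "(u::real) \<in> \<int> \<Longrightarrow> \<bar>u\<bar> < 1 \<Longrightarrow> u = 0"
  by (auto elim!: Ints_cases)

definition step_x :: "(int \<Rightarrow> int \<Rightarrow> real) \<Rightarrow> int \<Rightarrow> int \<Rightarrow> real" where
  "step_x h i j = round_residue (h (i + 1) j - h i j)"

definition step_y :: "(int \<Rightarrow> int \<Rightarrow> real) \<Rightarrow> int \<Rightarrow> int \<Rightarrow> real" where
  "step_y h i j = round_residue (h i (j + 1) - h i j)"

definition circulation :: "(int \<Rightarrow> int \<Rightarrow> real) \<Rightarrow> int \<Rightarrow> int \<Rightarrow> real" where
  "circulation h i j = step_x h i j + step_y h (i + 1) j - step_x h i (j + 1) - step_y h i j"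

text \<open>The raw increments around a cell telescope to zero, so the rounded
  circulation is always an integer.\<close>
lemma circulation_Ints: "circulation h i j \<in> \<int>"
proof -
  let ?d = "\<lambda>t. t - round_residue t"
  have "circulation h i j =
      - (?d (h (i + 1) j - h i j) + ?d (h (i + 1) (j + 1) - h (i + 1) j)
         - ?d (h (i + 1) (j + 1) - h i (j + 1)) - ?d (h i (j + 1) - h i j))"
    by (simp add: circulation_def step_x_def step_y_def)
  then show ?thesis using round_residue_Ints by (metis Ints_add Ints_diff Ints_minus)
qed

lemma box_circulation_sum:
  fixes \<rho> \<sigma> :: "int \<Rightarrow> int \<Rightarrow> real"
  shows "(\<Sum>j<N. \<Sum>i<K. \<rho> (int i) (int j) + \<sigma> (int i + 1) (int j)
                      - \<rho> (int i) (int j + 1) - \<sigma> (int i) (int j))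
    = (\<Sum>i<K. \<rho> (int i) 0) - (\<Sum>i<K. \<rho> (int i) (int N))
      + (\<Sum>j<N. \<sigma> (int K) (int j) - \<sigma> 0 (int j))"
proof -
  define R where "R n = (\<Sum>i<K. \<rho> (int i) (int n))" for n
  have row: "(\<Sum>i<K. \<rho> (int i) (int j) + \<sigma> (int i + 1) (int j)
                      - \<rho> (int i) (int j + 1) - \<sigma> (int i) (int j))
      = (R j - R (Suc j)) + (\<sigma> (int K) (int j) - \<sigma> 0 (int j))" for j
    using sum_lessThan_telescope[of "\<lambda>n. \<sigma> (int n) (int j)" K]
    by (simp add: R_def sum.distrib sum_subtractf algebra_simps)
  have "(\<Sum>j<N. \<Sum>i<K. \<rho> (int i) (int j) + \<sigma> (int i + 1) (int j)
                      - \<rho> (int i) (int j + 1) - \<sigma> (int i) (int j))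
      = (\<Sum>j<N. R j - R (Suc j)) + (\<Sum>j<N. \<sigma> (int K) (int j) - \<sigma> 0 (int j))"
    by (simp only: row sum.distrib)
  also have "(\<Sum>j<N. R j - R (Suc j)) = R 0 - R N"
    by (rule sum_lessThan_telescope')
  finally show ?thesis by (simp add: R_def)
qed

lemma step_x_periodic:
  assumes "\<And>i j. h i (j + int N) - h i j \<in> \<int>"
  shows "step_x h i (j + int N) = step_x h i j"
  unfolding step_x_def
proof (rule round_residue_shift)
  have "h (i + 1) (j + int N) - h i (j + int N) - (h (i + 1) j - h i j)
      = (h (i + 1) (j + int N) - h (i + 1) j) - (h i (j + int N) - h i j)" by simp
  then show "h (i + 1) (j + int N) - h i (j + int N) - (h (i + 1) j - h i j) \<in> \<int>"
    using assms by (metis Ints_diff)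
qed

lemma step_y_twist:
  assumes "N > 0" and "\<And>i j. h (i + int K) j - h i j - (c + of_int j / real N) \<in> \<int>"
  shows "step_y h (i + int K) j = round_residue (step_y h i j + 1 / real N)"
  unfolding step_y_def
proof (rule round_residue_shift)
  let ?e = "\<lambda>j. h (i + int K) j - h i j - (c + of_int j / real N)"
  let ?t = "h i (j + 1) - h i j"
  have "h (i + int K) (j + 1) - h (i + int K) j - (round_residue ?t + 1 / real N)
      = ?e (j + 1) - ?e j + (?t - round_residue ?t)"
    using assms(1) by (simp add: field_simps)
  then show "h (i + int K) (j + 1) - h (i + int K) j - (round_residue ?t + 1 / real N) \<in> \<int>"
    using assms(2) round_residue_Ints by (metis Ints_add Ints_diff)
qed

lemma large_phase_step_exists:
  fixes h :: "int \<Rightarrow> int \<Rightarrow> real"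
  assumes K: "K > 0" and N: "N \<ge> 3"
    and shift_x: "\<And>i j. h (i + int K) j - h i j - (c + of_int j / real N) \<in> \<int>"
    and shift_y: "\<And>i j. h i (j + int N) - h i j \<in> \<int>"
  shows "\<exists>i j. 0 \<le> i \<and> i < int K \<and> 0 \<le> j \<and> j < int N \<and>
     (dist_Z (h (i + 1) j - h i j) > 1/8 \<or> dist_Z (h i (j + 1) - h i j) > 1/8)"
proof (rule ccontr)
  assume "\<not> ?thesis"
  then have small: "\<bar>step_x h i j\<bar> \<le> 1/8" "\<bar>step_y h i j\<bar> \<le> 1/8"
    if "0 \<le> i" "i < int K" "0 \<le> j" "j < int N" for i j
    using that abs_round_residue_le_dist_Z unfolding step_x_def step_y_def
    by (meson not_less order_trans)+
  have N_pos: "N > 0" and inv_N: "0 < 1 / real N" "1 / real N \<le> 1/3"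
    using N by (auto simp: field_simps)
  have periodic_x: "step_x h i (j + int N) = step_x h i j" for i j
    by (rule step_x_periodic[where h = h, OF shift_y])
  have wrap_y: "step_y h (int K) j = step_y h 0 j + 1 / real N"
    if "0 \<le> j" "j < int N" for j
  proof -
    have "\<bar>step_y h 0 j\<bar> \<le> 1/8" using small(2)[of 0 j] that K by simp
    then have "\<bar>step_y h 0 j + 1 / real N\<bar> < 1/2"
      using inv_N unfolding abs_le_iff abs_less_iff by linarith
    then show ?thesis
      using step_y_twist[where h = h and K = K, OF N_pos shift_x, of 0 j] round_residue_small
      by simp
  qed
  have flat: "circulation h i j = 0" if "0 \<le> i" "i < int K" "0 \<le> j" "j < int N" for i j
  proof (rule Ints_abs_less_one_eq_0[OF circulation_Ints])
    have right: "\<bar>step_y h (i + 1) j\<bar> \<le> 1/8 + 1 / real N"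
    proof (cases "i + 1 < int K")
      case True
      then have "\<bar>step_y h (i + 1) j\<bar> \<le> 1/8" using small(2)[of "i + 1" j] that by simp
      then show ?thesis using inv_N by linarith
    next
      case False
      then have "i + 1 = int K" using that by simp
      then have "step_y h (i + 1) j = step_y h 0 j + 1 / real N"
        using wrap_y[of j] that by simp
      moreover have "\<bar>step_y h 0 j\<bar> \<le> 1/8" using small(2)[of 0 j] that K by simp
      ultimately show ?thesis using inv_N unfolding abs_le_iff by linarith
    qed
    have top: "\<bar>step_x h i (j + 1)\<bar> \<le> 1/8"
    proof (cases "j + 1 < int N")
      case True
      then show ?thesis using small(1)[of i "j + 1"] that by simp
    next
      case False
      then have "j + 1 = 0 + int N" using that by simp
      then show ?thesis using small(1)[of i 0] periodic_x[of i 0] that by simp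
    qed
    show "\<bar>circulation h i j\<bar> < 1"
      using right top small[OF that] inv_N unfolding circulation_def by linarith
  qed
  have "(\<Sum>j<N. \<Sum>i<K. circulation h (int i) (int j)) = 0"
    using flat by simp
  moreover have "(\<Sum>i<K. step_x h (int i) (int N)) = (\<Sum>i<K. step_x h (int i) 0)"
    using periodic_x[of _ 0] by simp
  moreover have "(\<Sum>j<N. step_y h (int K) (int j) - step_y h 0 (int j)) = 1"
    using wrap_y N_pos by simp
  ultimately show False
    using box_circulation_sum[of "step_x h" "step_y h" K N] by (simp add: circulation_def)
qed

lemma polar_phase_shift:
  assumes "z \<noteq> 0"
    and z: "z = complex_of_real (cmod z) * exp (2 * pi * \<i> * complex_of_real a)"
    and w: "w = complex_of_real (cmod w) * exp (2 * pi * \<i> * complex_of_real b)"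
    and rel: "w = exp (2 * pi * \<i> * complex_of_real s) * z"
  shows "b - a - s \<in> \<int>"
proof -
  let ?E = "\<lambda>t. exp (2 * pi * \<i> * complex_of_real t)"
  have "?E s * z = ?E s * (complex_of_real (cmod z) * ?E a)" using z by (rule arg_cong)
  also have "\<dots> = complex_of_real (cmod z) * ?E (a + s)"
    by (simp add: distrib_left exp_add mult_ac)
  finally have "w = complex_of_real (cmod z) * ?E (a + s)" using rel by simp
  moreover have "cmod w = cmod z" using rel by (simp add: norm_mult)
  ultimately have "?E b = ?E (a + s)" using w \<open>z \<noteq> 0\<close> by simp
  then obtain n :: int where
    "2 * pi * \<i> * complex_of_real b = 2 * pi * \<i> * complex_of_real (a + s) + (of_int (2 * n) * pi) * \<i>"
    using exp_eq by blast
  then have "2 * pi * \<i> * complex_of_real (b - a - s - of_int n) = 0"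
    by (simp add: algebra_simps)
  then have "complex_of_real (b - a - s) = complex_of_real (of_int n)"
    by simp
  then show ?thesis by (simp only: of_real_eq_iff) simp
qed

lemma quasi_periodic_phase_shifts:
  fixes G :: "real \<Rightarrow> real \<Rightarrow> complex" and H :: "real \<Rightarrow> real \<Rightarrow> real"
    and K N :: nat and x y :: real
  defines "g \<equiv> \<lambda>i j :: int. G (x + of_int i / real K) (y + of_int j / real N)"
    and "h \<equiv> \<lambda>i j :: int. H (x + of_int i / real K) (y + of_int j / real N)"
  assumes qp: "quasi_periodic G" and "K > 0" and "N > 0"
    and nonzero: "\<And>i j. g i j \<noteq> 0"
    and polar: "\<And>i j. g i j = complex_of_real (cmod (g i j)) * exp (2 * pi * \<i> * complex_of_real (h i j))"
  shows "h (i + int K) j - h i j - (y + of_int j / real N) \<in> \<int>"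
    and "h i (j + int N) - h i j \<in> \<int>"
proof -
  have qp_x: "\<And>u v. G (u + 1) v = exp (2 * pi * \<i> * complex_of_real v) * G u v"
    and qp_y: "\<And>u v. G u (v + 1) = G u v"
    using qp by (auto simp: quasi_periodic_def)
  have "x + of_int (i + int K) / real K = (x + of_int i / real K) + 1"
    using \<open>K > 0\<close> by (simp add: field_simps)
  then have "g (i + int K) j = exp (2 * pi * \<i> * complex_of_real (y + of_int j / real N)) * g i j"
    unfolding g_def by (simp only: qp_x)
  then show "h (i + int K) j - h i j - (y + of_int j / real N) \<in> \<int>"
    by (rule polar_phase_shift[OF nonzero polar polar])
  have "y + of_int (j + int N) / real N = (y + of_int j / real N) + 1"
    using \<open>N > 0\<close> by (simp add: field_simps)
  then have "g i (j + int N) = g i j"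
    unfolding g_def by (simp only: qp_y)
  then have "g i (j + int N) = exp (2 * pi * \<i> * complex_of_real 0) * g i j"
    by simp
  from polar_phase_shift[OF nonzero polar polar this]
  show "h i (j + int N) - h i j \<in> \<int>" by simp
qed

theorem lemma2:
  fixes G :: "real \<Rightarrow> real \<Rightarrow> complex"
    and H :: "real \<Rightarrow> real \<Rightarrow> real"
    and K N :: nat and x y :: real
  assumes "quasi_periodic G"
    and "K \<ge> 8" and "N \<ge> 8"
    and "0 \<le> x" and "x < 1 / real K" and "0 \<le> y" and "y < 1 / real N"
    and "\<forall>i j :: int. G (x + of_int i / real K) (y + of_int j / real N) \<noteq> 0"
    and "\<forall>i j :: int. G (x + of_int i / real K) (y + of_int j / real N) =
           complex_of_real (cmod (G (x + of_int i / real K) (y + of_int j / real N)))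
           * exp (2 * pi * \<i> * complex_of_real (H (x + of_int i / real K) (y + of_int j / real N)))"
  shows "\<exists>i j :: int. 0 \<le> i \<and> i < int K \<and> 0 \<le> j \<and> j < int N \<and>
     (let h = (\<lambda>a b :: int. H (x + of_int a / real K) (y + of_int b / real N)) in
        dist_Z (h (i + 1) j - h i j) > 1 / 8 \<or> dist_Z (h i (j + 1) - h i j) > 1 / 8)"
proof -
  define h where "h = (\<lambda>a b :: int. H (x + of_int a / real K) (y + of_int b / real N))"
  have "K > 0" "N > 0" "N \<ge> 3" using assms(2,3) by auto
  have shifts: "h (i + int K) j - h i j - (y + of_int j / real N) \<in> \<int>"
      "h i (j + int N) - h i j \<in> \<int>" for i j
    unfolding h_def using assms(8,9)
    by (intro quasi_periodic_phase_shifts[OF assms(1) \<open>K > 0\<close> \<open>N > 0\<close>]; simp)+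
  have "\<exists>i j. 0 \<le> i \<and> i < int K \<and> 0 \<le> j \<and> j < int N \<and>
      (dist_Z (h (i + 1) j - h i j) > 1/8 \<or> dist_Z (h i (j + 1) - h i j) > 1/8)"
    by (rule large_phase_step_exists[where h = h and c = y, OF \<open>K > 0\<close> \<open>N \<ge> 3\<close> shifts])
  then show ?thesis unfolding h_def Let_def by simp
qed

end
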